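(* Let $3\le d_1\le d_2\le d_3$. In $\mathbb{C}^{d_1}\otimes\mathbb{C}^{d_2}\otimes\mathbb{C}^{d_3}$ consider the following $d_2+2d_3-2$ product states: $|0-i\rangle_1|0\rangle_2|i\rangle_3$ for $1\le i\le d_1-1$; $|i\rangle_1|0-i\rangle_2|0\rangle_3$ for $1\le i\le d_1-1$; $|0\rangle_1|i\rangle_2|0-i\rangle_3$ for $1\le i\le d_2-1$; $|1\rangle_1|0-i\rangle_2|i\rangle_3$ for $d_1\le i\le d_2-1$; $|m_i\rangle_1|1\rangle_2|(i-1)-i\rangle_3$ for $d_2\le i\le d_3-1$, where $m_i=2$ if $i$ is even and $m_i=1$ if $i$ is odd; $|0-2\rangle_1|0-2\rangle_2|i\rangle_3$ for $d_1\le i\le d_3-1$; and the stopper state $|0+1+\cdots+(d_1-1)\rangle_1|0+1+\cdots+(d_2-1)\rangle_2|0+1+\cdots+(d_3-1)\rangle_3$. These states are pairwise orthogonal, and for every party $t\in\{1,2,3\}$, every orthogonality-preserving local POVM element $E_t$ on party $t$ for this set is proportional to the identity. Consequently, this set cannot be perfectly distinguished by LOCC.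
   Context: $\{|i\rangle\}$ is the computational basis; $|i_1\pm i_2\pm\cdots\pm i_r\rangle$ denotes $\frac{1}{\sqrt r}(|i_1\rangle\pm|i_2\rangle\pm\cdots\pm|i_r\rangle)$; subscripts indicate the party; ranges $a\le i\le b$ with $a>b$ are empty. For a set $\{|\psi_a\rangle\}$ of pairwise orthogonal states in $\mathbb{C}^{d_1}\otimes\cdots\otimes\mathbb{C}^{d_n}$, a positive semidefinite operator $E_t$ on $\mathbb{C}^{d_t}$ (a POVM element $M_t^\dagger M_t$ of a measurement by party $t$) is called orthogonality-preserving if $\langle\psi_a|(\mathbb{I}\otimes\cdots\otimes E_t\otimes\cdots\otimes\mathbb{I})|\psi_b\rangle=0$ for all $a\neq b$; the measurement is trivial if all its POVM elements are proportional to the identity. A set of orthogonal states for which every party can only perform trivial orthogonality-preserving measurements cannot be perfectly distinguished by LOCC. *)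

theory Defs
  imports Complex_Main
begin

text \<open>Vectors of C^d are functions nat => complex, only the entries with index < d matter.
  Operators on C^d are matrices nat => nat => complex (entries with indices < d matter).\<close>

type_synonym cvec = "nat \<Rightarrow> complex"
type_synonym cmat = "nat \<Rightarrow> nat \<Rightarrow> complex"
type_synonym tvec = "nat \<times> nat \<times> nat \<Rightarrow> complex"

definition ket :: "nat \<Rightarrow> cvec" where
  "ket i = (\<lambda>k. if k = i then 1 else 0)"

text \<open>|i1 +- i2 +- ... +- ir> = (1/sqrt r) (+-|i1> +- ... ), given as a list of (sign, index)\<close>
definition superpos :: "(complex \<times> nat) list \<Rightarrow> cvec" where
  "superpos l = (\<lambda>k. complex_of_real (1 / sqrt (real (length l))) *
                      (\<Sum>p\<leftarrow>l. fst p * ket (snd p) k))"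

definition kminus :: "nat \<Rightarrow> nat \<Rightarrow> cvec" where
  "kminus a b = superpos [(1, a), (-1, b)]"

definition kstop :: "nat \<Rightarrow> cvec" where
  "kstop d = superpos (map (\<lambda>j. (1, j)) [0..<d])"

definition tens :: "cvec \<times> cvec \<times> cvec \<Rightarrow> tvec" where
  "tens s = (case s of (a, b, c) \<Rightarrow> (\<lambda>(i, j, k). a i * b j * c k))"

definition inner3 :: "nat \<times> nat \<times> nat \<Rightarrow> tvec \<Rightarrow> tvec \<Rightarrow> complex" where
  "inner3 D phi psi = (case D of (d1, d2, d3) \<Rightarrow>
     (\<Sum>i<d1. \<Sum>j<d2. \<Sum>k<d3. cnj (phi (i, j, k)) * psi (i, j, k)))"

definition dimof :: "nat \<Rightarrow> nat \<times> nat \<times> nat \<Rightarrow> nat" where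
  "dimof t D = (case D of (d1, d2, d3) \<Rightarrow> if t = 1 then d1 else if t = 2 then d2 else d3)"

definition lift_op :: "nat \<Rightarrow> nat \<times> nat \<times> nat \<Rightarrow> cmat \<Rightarrow> tvec \<Rightarrow> tvec" where
  "lift_op t D E psi = (case D of (d1, d2, d3) \<Rightarrow>
     (\<lambda>(i, j, k).
        if t = 1 then (\<Sum>i'<d1. E i i' * psi (i', j, k))
        else if t = 2 then (\<Sum>j'<d2. E j j' * psi (i, j', k))
        else (\<Sum>k'<d3. E k k' * psi (i, j, k'))))"

definition psd :: "nat \<Rightarrow> cmat \<Rightarrow> bool" where
  "psd d E \<longleftrightarrow> (\<forall>i<d. \<forall>j<d. E i j = cnj (E j i)) \<and>
     (\<forall>x :: cvec. 0 \<le> Re (\<Sum>i<d. \<Sum>j<d. cnj (x i) * E i j * x j))"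

definition prop_id :: "nat \<Rightarrow> cmat \<Rightarrow> bool" where
  "prop_id d E \<longleftrightarrow> (\<exists>c. \<forall>i<d. \<forall>j<d. E i j = (if i = j then c else 0))"

definition pairwise_orth :: "nat \<times> nat \<times> nat \<Rightarrow> (cvec \<times> cvec \<times> cvec) list \<Rightarrow> bool" where
  "pairwise_orth D S \<longleftrightarrow> (\<forall>a<length S. \<forall>b<length S. a \<noteq> b \<longrightarrow>
      inner3 D (tens (S ! a)) (tens (S ! b)) = 0)"

definition orth_preserving :: "nat \<times> nat \<times> nat \<Rightarrow> (cvec \<times> cvec \<times> cvec) list \<Rightarrow> nat \<Rightarrow> cmat \<Rightarrow> bool" where
  "orth_preserving D S t E \<longleftrightarrow> (\<forall>a<length S. \<forall>b<length S. a \<noteq> b \<longrightarrow>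
      inner3 D (tens (S ! a)) (lift_op t D E (tens (S ! b))) = 0)"

definition m_idx :: "nat \<Rightarrow> nat" where
  "m_idx i = (if even i then 2 else 1)"

definition states :: "nat \<Rightarrow> nat \<Rightarrow> nat \<Rightarrow> (cvec \<times> cvec \<times> cvec) list" where
  "states d1 d2 d3 =
     [(kminus 0 i, ket 0, ket i). i \<leftarrow> [1..<d1]] @
     [(ket i, kminus 0 i, ket 0). i \<leftarrow> [1..<d1]] @
     [(ket 0, ket i, kminus 0 i). i \<leftarrow> [1..<d2]] @
     [(ket 1, kminus 0 i, ket i). i \<leftarrow> [d1..<d2]] @
     [(ket (m_idx i), ket 1, kminus (i - 1) i). i \<leftarrow> [d2..<d3]] @
     [(kminus 0 2, kminus 0 2, ket i). i \<leftarrow> [d1..<d3]] @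
     [(kstop d1, kstop d2, kstop d3)]"

end

theory Submission
  imports Defs
begin

text \<open>All states are product states of unit vectors, so every matrix element factors party by
  party: \<open>\<langle>x|E \<otimes> I \<otimes> I|y\<rangle> = \<langle>x\<^sub>1|E|y\<^sub>1\<rangle> \<langle>x\<^sub>2|y\<^sub>2\<rangle> \<langle>x\<^sub>3|y\<^sub>3\<rangle>\<close>. For two orthogonal states whose
  components at the other parties are not orthogonal, orthogonality preservation therefore forces
  \<open>\<langle>x\<^sub>t|E|y\<^sub>t\<rangle> = 0\<close>; suitable such pairs kill every entry of \<open>E\<close> above the diagonal, and
  hermiticity the ones below. Pairing a state with component \<open>|a - b\<rangle>\<close> at party \<open>t\<close> with the
  stopper then gives \<open>E\<^sub>a\<^sub>a = E\<^sub>b\<^sub>b\<close>, and these equalities connect every diagonal entry to \<open>E\<^sub>0\<^sub>0\<close>;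
  for party 3 beyond \<open>d\<^sub>2\<close> this is a chain through the states \<open>|m\<^sub>i\<rangle>|1\<rangle>|(i-1) - i\<rangle>\<close>.\<close>

definition cinner :: "nat \<Rightarrow> cvec \<Rightarrow> cvec \<Rightarrow> complex" where
  "cinner d a b = (\<Sum>i<d. cnj (a i) * b i)"

definition mat_vec :: "nat \<Rightarrow> cmat \<Rightarrow> cvec \<Rightarrow> cvec" where
  "mat_vec d E b = (\<lambda>i. \<Sum>j<d. E i j * b j)"

definition inv_sqrt :: "nat \<Rightarrow> complex" where
  "inv_sqrt n = complex_of_real (1 / sqrt (real n))"

lemma inner3_tens [simp]:
  "inner3 (d1, d2, d3) (tens (a1, a2, a3)) (tens (b1, b2, b3)) =
     cinner d1 a1 b1 * cinner d2 a2 b2 * cinner d3 a3 b3"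
proof -
  have "cinner d1 a1 b1 * (cinner d2 a2 b2 * cinner d3 a3 b3) =
      (\<Sum>i<d1. \<Sum>j<d2. \<Sum>k<d3. cnj (a1 i) * b1 i * (cnj (a2 j) * b2 j * (cnj (a3 k) * b3 k)))"
    unfolding cinner_def sum_product by (simp add: sum_distrib_left)
  then show ?thesis
    by (simp add: inner3_def tens_def mult_ac)
qed

text \<open>Stated with \<open>Suc 0\<close>, the simp normal form of the party index \<open>1\<close>.\<close>

lemma lift_op_1_tens [simp]:
  "lift_op (Suc 0) (d1, d2, d3) E (tens (b1, b2, b3)) = tens (mat_vec d1 E b1, b2, b3)"
  by (simp add: fun_eq_iff lift_op_def tens_def mat_vec_def sum_distrib_left sum_distrib_right mult_ac)

lemma lift_op_2_tens [simp]:
  "lift_op 2 (d1, d2, d3) E (tens (b1, b2, b3)) = tens (b1, mat_vec d2 E b2, b3)"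
  by (simp add: fun_eq_iff lift_op_def tens_def mat_vec_def sum_distrib_left sum_distrib_right mult_ac)

lemma lift_op_3_tens [simp]:
  "lift_op 3 (d1, d2, d3) E (tens (b1, b2, b3)) = tens (b1, b2, mat_vec d3 E b3)"
  by (simp add: fun_eq_iff lift_op_def tens_def mat_vec_def sum_distrib_left sum_distrib_right mult_ac)

lemma inner3_commute: "inner3 D \<psi> \<phi> = cnj (inner3 D \<phi> \<psi>)"
  by (simp add: inner3_def mult.commute split: prod.split)

lemma inv_sqrt_nonzero [simp]: "0 < n \<Longrightarrow> inv_sqrt n \<noteq> 0"
  by (simp add: inv_sqrt_def)

lemma inv_sqrt_square: "0 < n \<Longrightarrow> inv_sqrt n * inv_sqrt n = 1 / of_nat n"
  by (simp add: inv_sqrt_def flip: of_real_mult)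

lemma cnj_inv_sqrt [simp]: "cnj (inv_sqrt n) = inv_sqrt n"
  by (simp add: inv_sqrt_def)

lemma cnj_ket [simp]: "cnj (ket i k) = ket i k"
  by (simp add: ket_def)

lemma ket_apply [simp]: "ket i k = (if k = i then 1 else 0)"
  by (simp add: ket_def)

lemma kminus_apply [simp]: "kminus a b k = inv_sqrt 2 * (ket a k - ket b k)"
  by (simp add: kminus_def superpos_def inv_sqrt_def algebra_simps del: ket_apply)

lemma kstop_apply [simp]: "kstop d k = (if k < d then inv_sqrt d else 0)"
proof -
  have "(\<Sum>j\<leftarrow>[0..<d]. ket j k) = (if k < d then 1 else 0)"
    by (simp add: sum_list_sum_nth atLeast0LessThan del: ket_apply) (simp add: ket_def)
  then show ?thesis
    by (simp add: kstop_def superpos_def o_def inv_sqrt_def del: ket_apply)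
qed

lemma sum_ket_mult: "i < d \<Longrightarrow> (\<Sum>k<d. ket i k * v k) = v i"
  by (simp add: if_distrib if_distribR cong: if_cong)

lemma cinner_ket [simp]: "i < d \<Longrightarrow> cinner d (ket i) v = v i"
  by (simp add: cinner_def sum_ket_mult del: ket_apply)

lemma cinner_kminus [simp]:
  assumes "a < d" "b < d"
  shows "cinner d (kminus a b) v = inv_sqrt 2 * (v a - v b)"
proof -
  have "cinner d (kminus a b) v = inv_sqrt 2 * ((\<Sum>k<d. ket a k * v k) - (\<Sum>k<d. ket b k * v k))"
    by (simp add: cinner_def sum_subtractf algebra_simps sum_distrib_left del: ket_apply)
  then show ?thesis using assms by (simp add: sum_ket_mult del: ket_apply)
qed

lemma cinner_kstop [simp]: "cinner d (kstop d) v = inv_sqrt d * sum v {..<d}"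
  by (simp add: cinner_def sum_distrib_left)

lemma cinner_kminus_self [simp]:
  "a < d \<Longrightarrow> b < d \<Longrightarrow> a \<noteq> b \<Longrightarrow> cinner d (kminus a b) (kminus a b) = 1"
  by (simp add: algebra_simps inv_sqrt_square)

lemma cinner_kstop_self [simp]: "0 < d \<Longrightarrow> cinner d (kstop d) (kstop d) = 1"
  by (simp add: algebra_simps inv_sqrt_square)

lemma mat_vec_ket [simp]: "j < d \<Longrightarrow> mat_vec d E (ket j) = (\<lambda>i. E i j)"
  by (simp add: mat_vec_def sum_ket_mult mult.commute del: ket_apply)

lemma mat_vec_kminus [simp]:
  assumes "a < d" "b < d"
  shows "mat_vec d E (kminus a b) = (\<lambda>i. inv_sqrt 2 * (E i a - E i b))"
proof
  fix i
  have "mat_vec d E (kminus a b) i =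
      inv_sqrt 2 * ((\<Sum>k<d. ket a k * E i k) - (\<Sum>k<d. ket b k * E i k))"
    by (simp add: mat_vec_def sum_subtractf algebra_simps sum_distrib_left del: ket_apply)
  then show "mat_vec d E (kminus a b) i = inv_sqrt 2 * (E i a - E i b)"
    using assms by (simp add: sum_ket_mult del: ket_apply)
qed

definition diagonal :: "nat \<Rightarrow> cmat \<Rightarrow> bool" where
  "diagonal d E \<longleftrightarrow> (\<forall>i<d. \<forall>j<d. i \<noteq> j \<longrightarrow> E i j = 0)"

lemma mat_vec_kstop_diagonal:
  assumes "diagonal d E" "i < d"
  shows "mat_vec d E (kstop d) i = inv_sqrt d * E i i"
proof -
  have "mat_vec d E (kstop d) i = (\<Sum>j\<in>{i}. E i j * kstop d j)"
    using assms unfolding mat_vec_def diagonal_def by (intro sum.mono_neutral_right) auto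
  then show ?thesis using assms(2) by simp
qed

lemma diagonal_if_upper_zero:
  assumes "psd d E" "\<And>i j. i < j \<Longrightarrow> j < d \<Longrightarrow> E i j = 0"
  shows "diagonal d E"
  unfolding diagonal_def
proof (intro allI impI)
  fix i j assume "i < d" "j < d" "i \<noteq> j"
  then consider "i < j" | "j < i" by linarith
  then show "E i j = 0"
  proof cases
    case 2
    have "E i j = cnj (E j i)" using assms(1) \<open>i < d\<close> \<open>j < d\<close> unfolding psd_def by blast
    then show ?thesis using assms(2)[OF 2 \<open>i < d\<close>] by simp
  qed (use assms(2) \<open>j < d\<close> in blast)
qed

lemma prop_id_if_diagonal:
  assumes "diagonal d E" "\<And>i. 0 < i \<Longrightarrow> i < d \<Longrightarrow> E i i = E 0 0"
  shows "prop_id d E"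
  unfolding prop_id_def
proof (intro exI allI impI)
  fix i j assume "i < d" "j < d"
  then show "E i j = (if i = j then E 0 0 else 0)"
    using assms unfolding diagonal_def by (cases "i = 0") auto
qed

lemma orth_preserving_orthogonal:
  assumes "orth_preserving D S t E" "x \<in> set S" "y \<in> set S"
    and "inner3 D (tens x) (tens x) \<noteq> 0" "inner3 D (tens x) (tens y) = 0"
  shows "inner3 D (tens x) (lift_op t D E (tens y)) = 0"
proof -
  obtain a b where "a < length S" "S ! a = x" "b < length S" "S ! b = y"
    using assms(2,3) by (auto simp: in_set_conv_nth)
  moreover have "x \<noteq> y" using assms(4,5) by auto
  ultimately show ?thesis using assms(1) unfolding orth_preserving_def by blast
qed

lemma sorted_wrt_upt_iff:
  "sorted_wrt P [m..<n] \<longleftrightarrow> (\<forall>i j. m \<le> i \<longrightarrow> i < j \<longrightarrow> j < n \<longrightarrow> P i j)"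
proof
  assume sorted: "sorted_wrt P [m..<n]"
  show "\<forall>i j. m \<le> i \<longrightarrow> i < j \<longrightarrow> j < n \<longrightarrow> P i j"
  proof (intro allI impI)
    fix i j assume "m \<le> i" "i < j" "j < n"
    then have "P ([m..<n] ! (i - m)) ([m..<n] ! (j - m))"
      by (intro sorted_wrt_nth_less[OF sorted]) auto
    then show "P i j" using \<open>m \<le> i\<close> \<open>i < j\<close> \<open>j < n\<close> by simp
  qed
next
  assume "\<forall>i j. m \<le> i \<longrightarrow> i < j \<longrightarrow> j < n \<longrightarrow> P i j"
  then show "sorted_wrt P [m..<n]"
    by (intro sorted_wrt_mono_rel[OF _ sorted_wrt_upt]) simp
qed

lemma pairwise_orth_iff_sorted_wrt:
  "pairwise_orth D S \<longleftrightarrow> sorted_wrt (\<lambda>x y. inner3 D (tens x) (tens y) = 0) S"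
  unfolding pairwise_orth_def sorted_wrt_iff_nth_less
proof (intro iffI allI impI)
  fix a b
  assume orth: "\<forall>i j. i < j \<longrightarrow> j < length S \<longrightarrow> inner3 D (tens (S ! i)) (tens (S ! j)) = 0"
    and "a < length S" "b < length S" "a \<noteq> b"
  then consider "a < b" | "b < a" by linarith
  then show "inner3 D (tens (S ! a)) (tens (S ! b)) = 0"
  proof cases
    case 2
    then have "inner3 D (tens (S ! b)) (tens (S ! a)) = 0" using orth \<open>a < length S\<close> by blast
    then show ?thesis by (subst inner3_commute) simp
  qed (use orth \<open>b < length S\<close> in blast)
qed simp

lemma length_states:
  "0 < d1 \<Longrightarrow> d1 \<le> d2 \<Longrightarrow> d2 \<le> d3 \<Longrightarrow> length (states d1 d2 d3) = d2 + 2 * d3 - 2"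
  by (simp add: states_def)

lemma m_idx_neq_0 [simp]: "m_idx i \<noteq> 0"
  by (simp add: m_idx_def)

lemma m_idx_less: "3 \<le> d \<Longrightarrow> m_idx i < d"
  by (simp add: m_idx_def)

lemma m_idx_eq_imp_far: "m_idx i = m_idx j \<Longrightarrow> i \<noteq> j \<Longrightarrow> i + 2 \<le> j \<or> j + 2 \<le> i"
  by (simp add: m_idx_def split: if_splits) presburger+

lemma inner3_states_self:
  assumes "3 \<le> d1" "d1 \<le> d2" "d2 \<le> d3" "s \<in> set (states d1 d2 d3)"
  shows "inner3 (d1, d2, d3) (tens s) (tens s) = 1"
  using assms m_idx_less[OF assms(1)]
  \<comment> \<open>without the general rules, which would fire first, the normalisation lemmas apply\<close>
  by (auto simp: states_def simp del: cinner_kminus cinner_kstop)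

lemma pairwise_orth_states:
  assumes "3 \<le> d1" "d1 \<le> d2" "d2 \<le> d3"
  shows "pairwise_orth (d1, d2, d3) (states d1 d2 d3)"
  unfolding pairwise_orth_iff_sorted_wrt states_def
  using assms m_idx_less[OF assms(1)]
  \<comment> \<open>two states \<open>|m\<^sub>i\<rangle>|1\<rangle>|(i-1) - i\<rangle>\<close> share \<open>m\<^sub>i\<close> only if their third components have disjoint support\<close>
  by (auto simp: sorted_wrt_append sorted_wrt_map sorted_wrt_upt_iff dest: m_idx_eq_imp_far)

lemma orth_preserving_states_orthogonal:
  assumes "3 \<le> d1" "d1 \<le> d2" "d2 \<le> d3"
    and "orth_preserving (d1, d2, d3) (states d1 d2 d3) t E"
    and "x \<in> set (states d1 d2 d3)" "y \<in> set (states d1 d2 d3)"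
    and "inner3 (d1, d2, d3) (tens x) (tens y) = 0"
  shows "inner3 (d1, d2, d3) (tens x) (lift_op t (d1, d2, d3) E (tens y)) = 0"
  using orth_preserving_orthogonal[OF assms(4-6)] inner3_states_self[OF assms(1-3,5)] assms(7)
  by simp

lemma prop_id_if_orth_preserving_party_1:
  assumes d: "3 \<le> d1" "d1 \<le> d2" "d2 \<le> d3" and "psd d1 E"
    and op: "orth_preserving (d1, d2, d3) (states d1 d2 d3) 1 E"
  shows "prop_id d1 E"
proof -
  note preserved = orth_preserving_states_orthogonal[OF d op]
  have diag: "diagonal d1 E"
  proof (rule diagonal_if_upper_zero[OF \<open>psd d1 E\<close>])
    fix i j assume ij: "i < j" "j < d1"
    show "E i j = 0"
    proof (cases "i = 0")
      case True
      have "inner3 (d1, d2, d3) (tens (ket 0, ket j, kminus 0 j))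
          (lift_op 1 (d1, d2, d3) E (tens (ket j, kminus 0 j, ket 0))) = 0"
        by (rule preserved) (use ij d in \<open>auto simp: states_def\<close>)
      then show ?thesis using True ij d by simp
    next
      case False
      have "inner3 (d1, d2, d3) (tens (ket i, kminus 0 i, ket 0))
          (lift_op 1 (d1, d2, d3) E (tens (ket j, kminus 0 j, ket 0))) = 0"
        by (rule preserved) (use ij d False in \<open>auto simp: states_def\<close>)
      then show ?thesis using False ij d by simp
    qed
  qed
  moreover have "E i i = E 0 0" if "0 < i" "i < d1" for i
  proof -
    have "inner3 (d1, d2, d3) (tens (kminus 0 i, ket 0, ket i))
        (lift_op 1 (d1, d2, d3) E (tens (kstop d1, kstop d2, kstop d3))) = 0"
      by (rule preserved) (use that d in \<open>auto simp: states_def\<close>)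
    then show ?thesis using that d by (simp add: mat_vec_kstop_diagonal[OF diag])
  qed
  ultimately show ?thesis by (rule prop_id_if_diagonal)
qed

lemma prop_id_if_orth_preserving_party_2:
  assumes d: "3 \<le> d1" "d1 \<le> d2" "d2 \<le> d3" and "psd d2 E"
    and op: "orth_preserving (d1, d2, d3) (states d1 d2 d3) 2 E"
  shows "prop_id d2 E"
proof -
  note preserved = orth_preserving_states_orthogonal[OF d op]
  have upper_pos: "E i j = 0" if ij: "0 < i" "i < j" "j < d2" for i j
  proof -
    have "inner3 (d1, d2, d3) (tens (ket 0, ket i, kminus 0 i))
        (lift_op 2 (d1, d2, d3) E (tens (ket 0, ket j, kminus 0 j))) = 0"
      by (rule preserved) (use ij d in \<open>auto simp: states_def\<close>)
    then show ?thesis using ij d by simp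
  qed
  have upper_0: "E 0 j = 0" if j: "0 < j" "j < d2" for j
  proof (cases "j < d1")
    case True
    have "inner3 (d1, d2, d3) (tens (kminus 0 j, ket 0, ket j))
        (lift_op 2 (d1, d2, d3) E (tens (ket 0, ket j, kminus 0 j))) = 0"
      by (rule preserved) (use j d True in \<open>auto simp: states_def\<close>)
    then show ?thesis using j d True by simp
  next
    case False
    have "inner3 (d1, d2, d3) (tens (kminus 0 2, kminus 0 2, ket j))
        (lift_op 2 (d1, d2, d3) E (tens (ket 0, ket j, kminus 0 j))) = 0"
      by (rule preserved) (use j d False in \<open>auto simp: states_def\<close>)
    then show ?thesis using j d False upper_pos[of 2 j] by simp
  qed
  have "E i j = 0" if "i < j" "j < d2" for i j
    using that upper_0 upper_pos by (cases "i = 0") auto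
  then have diag: "diagonal d2 E" by (rule diagonal_if_upper_zero[OF \<open>psd d2 E\<close>])
  moreover have "E i i = E 0 0" if i: "0 < i" "i < d2" for i
  proof (cases "i < d1")
    case True
    have "inner3 (d1, d2, d3) (tens (ket i, kminus 0 i, ket 0))
        (lift_op 2 (d1, d2, d3) E (tens (kstop d1, kstop d2, kstop d3))) = 0"
      by (rule preserved) (use i d True in \<open>auto simp: states_def\<close>)
    then show ?thesis using i d True by (simp add: mat_vec_kstop_diagonal[OF diag])
  next
    case False
    have "inner3 (d1, d2, d3) (tens (ket 1, kminus 0 i, ket i))
        (lift_op 2 (d1, d2, d3) E (tens (kstop d1, kstop d2, kstop d3))) = 0"
      by (rule preserved) (use i d False in \<open>auto simp: states_def\<close>)
    then show ?thesis using i d False by (simp add: mat_vec_kstop_diagonal[OF diag])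
  qed
  ultimately show ?thesis by (rule prop_id_if_diagonal)
qed

lemma prop_id_if_orth_preserving_party_3:
  assumes d: "3 \<le> d1" "d1 \<le> d2" "d2 \<le> d3" and "psd d3 E"
    and op: "orth_preserving (d1, d2, d3) (states d1 d2 d3) 3 E"
  shows "prop_id d3 E"
proof -
  note preserved = orth_preserving_states_orthogonal[OF d op]
  have "E i j = 0" if ij: "i < j" "j < d3" for i j
  proof -
    consider "i = 0" "j < d1" | "i = 0" "d1 \<le> j" | "0 < i" "j < d1" | "0 < i" "i < d1" "d1 \<le> j"
      | "d1 \<le> i"
      by linarith
    then show ?thesis
    proof cases
      case 1
      have "inner3 (d1, d2, d3) (tens (ket j, kminus 0 j, ket 0))
          (lift_op 3 (d1, d2, d3) E (tens (kminus 0 j, ket 0, ket j))) = 0"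
        by (rule preserved) (use ij d 1 in \<open>auto simp: states_def\<close>)
      then show ?thesis using ij d 1 by simp
    next
      case 2
      have "inner3 (d1, d2, d3) (tens (ket 2, kminus 0 2, ket 0))
          (lift_op 3 (d1, d2, d3) E (tens (kminus 0 2, kminus 0 2, ket j))) = 0"
        by (rule preserved) (use ij d 2 in \<open>auto simp: states_def\<close>)
      then show ?thesis using ij d 2 by simp
    next
      case 3
      have "inner3 (d1, d2, d3) (tens (kminus 0 i, ket 0, ket i))
          (lift_op 3 (d1, d2, d3) E (tens (kminus 0 j, ket 0, ket j))) = 0"
        by (rule preserved) (use ij d 3 in \<open>auto simp: states_def\<close>)
      then show ?thesis using ij d 3 by simp
    next
      case 4
      have "inner3 (d1, d2, d3) (tens (kminus 0 i, ket 0, ket i))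
          (lift_op 3 (d1, d2, d3) E (tens (kminus 0 2, kminus 0 2, ket j))) = 0"
        by (rule preserved) (use ij d 4 in \<open>auto simp: states_def\<close>)
      then show ?thesis using ij d 4 by (cases "i = 2") (simp_all flip: mult_2)
    next
      case 5
      have "inner3 (d1, d2, d3) (tens (kminus 0 2, kminus 0 2, ket i))
          (lift_op 3 (d1, d2, d3) E (tens (kminus 0 2, kminus 0 2, ket j))) = 0"
        by (rule preserved) (use ij d 5 in \<open>auto simp: states_def\<close>)
      then show ?thesis using ij d 5 by simp
    qed
  qed
  then have diag: "diagonal d3 E" by (rule diagonal_if_upper_zero[OF \<open>psd d3 E\<close>])
  have diag_low: "E i i = E 0 0" if i: "0 < i" "i < d2" for i
  proof -
    have "inner3 (d1, d2, d3) (tens (ket 0, ket i, kminus 0 i))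
        (lift_op 3 (d1, d2, d3) E (tens (kstop d1, kstop d2, kstop d3))) = 0"
      by (rule preserved) (use i d in \<open>auto simp: states_def\<close>)
    then show ?thesis using i d by (simp add: mat_vec_kstop_diagonal[OF diag])
  qed
  have diag_step: "E (i - 1) (i - 1) = E i i" if i: "d2 \<le> i" "i < d3" for i
  proof -
    have "inner3 (d1, d2, d3) (tens (ket (m_idx i), ket 1, kminus (i - 1) i))
        (lift_op 3 (d1, d2, d3) E (tens (kstop d1, kstop d2, kstop d3))) = 0"
      by (rule preserved) (use i d in \<open>auto simp: states_def\<close>)
    then show ?thesis using i d m_idx_less[OF d(1)] by (simp add: mat_vec_kstop_diagonal[OF diag])
  qed
  have "E i i = E 0 0" if "0 < i" "i < d3" for i
    using that
  proof (induction i)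
    case (Suc n)
    then show ?case
      using diag_low[of "Suc n"] diag_step[of "Suc n"] d by (cases "Suc n < d2") auto
  qed simp
  with diag show ?thesis by (rule prop_id_if_diagonal)
qed

theorem lemma4:
  fixes d1 d2 d3 :: nat
  assumes "3 \<le> d1" and "d1 \<le> d2" and "d2 \<le> d3"
  shows "length (states d1 d2 d3) = d2 + 2 * d3 - 2 \<and>
         pairwise_orth (d1, d2, d3) (states d1 d2 d3) \<and>
         (\<forall>t \<in> {1, 2, 3}. \<forall>E. psd (dimof t (d1, d2, d3)) E \<and>
             orth_preserving (d1, d2, d3) (states d1 d2 d3) t E
             \<longrightarrow> prop_id (dimof t (d1, d2, d3)) E)"
proof (intro conjI ballI allI impI)
  show "length (states d1 d2 d3) = d2 + 2 * d3 - 2"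
    using assms by (intro length_states) auto
  show "pairwise_orth (d1, d2, d3) (states d1 d2 d3)"
    using assms by (rule pairwise_orth_states)
next
  fix t E
  assume "t \<in> {1, 2, 3}"
    and "psd (dimof t (d1, d2, d3)) E \<and> orth_preserving (d1, d2, d3) (states d1 d2 d3) t E"
  then show "prop_id (dimof t (d1, d2, d3)) E"
    using prop_id_if_orth_preserving_party_1[OF assms] prop_id_if_orth_preserving_party_2[OF assms] prop_id_if_orth_preserving_party_3[OF assms]
    by (auto simp: dimof_def)
qed

end
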